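(* Every CCCP configuration $\Gamma\triangleright W$ is well-timed: there is $k\in\mathbb N$ such that whenever $\Gamma\triangleright W\,(\to_i)^h\,\mathcal C'$ for some $h\ge 0$ and some configuration $\mathcal C'$, then $h\le k$.
   Context: CCCP syntax. Fix a set of channels (ranged over by $c,d$) and a set of values containing data variables $x,y$ and a special error value $\mathtt{err}$; closed values $v,w$ contain no variables, and each closed value $v$ has a transmission time $\delta_v\in\mathbb{N}$ with $\delta_v\ge 1$. Expressions $e$ are built from values; closed expressions evaluate to closed values via $[\![e]\!]$. Station code (processes) is given by $P,Q ::= c!\langle e\rangle.P \mid \lfloor ?c(x).P\rfloor Q \mid \sigma.P \mid \tau.P \mid P+Q \mid [b]P,Q \mid X \mid \mathbf{0} \mid \mathrm{fix}\,X.P$, where $b$ is either $e_1=e_2$ or $\mathrm{exp}(c)$, $[b]P,Q$ is a conditional (then-branch $P$, else-branch $Q$), $\lfloor ?c(x).P\rfloor Q$ is a receiver on $c$ with timeout branch $Q$ ($x$ bound in $P$), $\sigma.P$ is a one-unit delay and $\sigma^n.P$ denotes $n$ nested delays. System terms are $W ::= P \mid \lfloor ?c(x).P\rfloor \mid W_1|W_2 \mid \nu c{:}(n,v).W$, where $\lfloor ?c(x).P\rfloor$ is an active receiver ($x$ bound in $P$) and $\nu c{:}(n,v).W$ restricts $c$ with local channel state $(n,v)$. In $\mathrm{fix}\,X.P$ every occurrence of $X$ in $P$ is guarded, i.e. lies within a broadcast prefix, a receiver continuation, a timeout branch, a $\sigma$-prefix, or a branch of a conditional. Terms are identified up to $\alpha$-conversion.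 A channel environment is a map $\Gamma$ from channels to $\mathbb{N}\times$(closed values); write $\Gamma\vdash_t c:n$ and $\Gamma\vdash_v c:w$ when $\Gamma(c)=(n,w)$; $c$ is idle in $\Gamma$ if $\Gamma\vdash_t c:0$ and exposed otherwise; $\Gamma[c\mapsto(n,v)]$ is $\Gamma$ updated at $c$; $\Gamma\le\Gamma'$ iff for every $c$, $\Gamma\vdash_t c:n$ and $\Gamma'\vdash_t c:m$ imply $n\le m$. A configuration $\Gamma\triangleright W$ is a channel environment together with a closed system term (no free data or process variables). Intensional semantics. Actions $\lambda$ are $c!v$, $c?v$, $\sigma$, $\tau$. The environment update $\lambda(\Gamma)$ is: $\sigma(\Gamma)(c)=(\max(n-1,0),w)$ whenever $\Gamma(c)=(n,w)$; $c!v(\Gamma)$ agrees with $\Gamma$ except at $c$, where it is $(\delta_v,v)$ if $c$ is idle in $\Gamma$ and $(\max(\delta_v,n),\mathtt{err})$ if $\Gamma\vdash_t c:n>0$; $c?v(\Gamma)=c!v(\Gamma)$; $\tau(\Gamma)=\Gamma$. The predicate $\mathrm{rcv}(W,c)$ on terms is: true for $\lfloor ?d(x).P\rfloor Q$ iff $d=c$; $\mathrm{rcv}(P+Q,c)=\mathrm{rcv}(P,c)\vee\mathrm{rcv}(Q,c)$; $\mathrm{rcv}(\mathrm{fix}\,X.P,c)=\mathrm{rcv}(P,c)$; $\mathrm{rcv}(W_1|W_2,c)=\mathrm{rcv}(W_1,c)\vee\mathrm{rcv}(W_2,c)$; $\mathrm{rcv}(\nu d{:}(n,v).W,c)=\mathrm{rcv}(W,c)$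 (with $d\neq c$ by $\alpha$-conversion); false for all other forms (broadcasts, $\tau.P$, $\sigma.P$, conditionals, $X$, $\mathbf 0$, active receivers). Then $\mathrm{rcv}(\Gamma\triangleright W,c)$ holds iff $c$ is idle in $\Gamma$ and $\mathrm{rcv}(W,c)$. Transitions $\Gamma\triangleright W\xrightarrow{\lambda}W'$ are the least relation closed under: (Snd) $[\![e]\!]=v$ implies $\Gamma\triangleright c!\langle e\rangle.P\xrightarrow{c!v}\sigma^{\delta_v}.P$; (Rcv) $c$ idle in $\Gamma$ implies $\Gamma\triangleright\lfloor ?c(x).P\rfloor Q\xrightarrow{c?v}\lfloor ?c(x).P\rfloor$; (RcvIgn) $\neg\mathrm{rcv}(\Gamma\triangleright W,c)$ implies $\Gamma\triangleright W\xrightarrow{c?v}W$; (Sync) $\Gamma\triangleright W_1\xrightarrow{c!v}W_1'$ and $\Gamma\triangleright W_2\xrightarrow{c?v}W_2'$ imply $\Gamma\triangleright W_1|W_2\xrightarrow{c!v}W_1'|W_2'$, and symmetrically; (RcvPar) $\Gamma\triangleright W_i\xrightarrow{c?v}W_i'$ for $i=1,2$ imply $\Gamma\triangleright W_1|W_2\xrightarrow{c?v}W_1'|W_2'$; (TimeNil) $\Gamma\triangleright\mathbf 0\xrightarrow{\sigma}\mathbf 0$; (Sleep) $\Gamma\triangleright\sigma.P\xrightarrow{\sigma}P$; (ActRcv) $\Gamma\vdash_t c:n$, $n>1$ imply $\Gamma\triangleright\lfloor ?c(x).P\rfloor\xrightarrow{\sigma}\lfloor ?c(x).P\rfloor$;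 (EndRcv) $\Gamma\vdash_t c:1$, $\Gamma\vdash_v c:w$ imply $\Gamma\triangleright\lfloor ?c(x).P\rfloor\xrightarrow{\sigma}\{w/x\}P$; (Timeout) $c$ idle in $\Gamma$ implies $\Gamma\triangleright\lfloor ?c(x).P\rfloor Q\xrightarrow{\sigma}Q$; (RcvLate) $c$ exposed in $\Gamma$ implies $\Gamma\triangleright\lfloor ?c(x).P\rfloor Q\xrightarrow{\tau}\lfloor ?c(x).\{\mathtt{err}/x\}P\rfloor$; (Tau) $\Gamma\triangleright\tau.P\xrightarrow{\tau}P$; (Then)/(Else) $\Gamma\triangleright[b]P,Q\xrightarrow{\tau}\sigma.P$ if $[\![b]\!]_\Gamma$ is true and $\xrightarrow{\tau}\sigma.Q$ otherwise, where $[\![e_1=e_2]\!]_\Gamma$ is true iff $[\![e_1]\!]=[\![e_2]\!]$ and $[\![\mathrm{exp}(c)]\!]_\Gamma$ is true iff $c$ is exposed in $\Gamma$; (TimePar) $\Gamma\triangleright W_i\xrightarrow{\sigma}W_i'$ for $i=1,2$ imply $\Gamma\triangleright W_1|W_2\xrightarrow{\sigma}W_1'|W_2'$; (TauPar) $\Gamma\triangleright W_1\xrightarrow{\tau}W_1'$ implies $\Gamma\triangleright W_1|W_2\xrightarrow{\tau}W_1'|W_2$, and symmetrically; (Rec) $\Gamma\triangleright\{\mathrm{fix}\,X.P/X\}P\xrightarrow{\lambda}W$ implies $\Gamma\triangleright\mathrm{fix}\,X.P\xrightarrow{\lambda}W$; (Sum) for $\lambda\in\{\tau,c!v\}$, $\Gamma\triangleright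 P\xrightarrow{\lambda}W$ implies $\Gamma\triangleright P+Q\xrightarrow{\lambda}W$, and symmetrically; (SumTime) $\Gamma\triangleright P\xrightarrow{\sigma}P'$, $\Gamma\triangleright Q\xrightarrow{\sigma}Q'$ imply $\Gamma\triangleright P+Q\xrightarrow{\sigma}P'+Q'$; (SumRcv) $\Gamma\triangleright P\xrightarrow{c?v}W$ and $\mathrm{rcv}(\Gamma\triangleright P,c)$ imply $\Gamma\triangleright P+Q\xrightarrow{c?v}W$, and symmetrically; (ResI) $\Gamma[c\mapsto(n,v)]\triangleright W\xrightarrow{c!w}W'$ implies $\Gamma\triangleright\nu c{:}(n,v).W\xrightarrow{\tau}\nu c{:}(c!w(\Gamma[c\mapsto(n,v)]))(c).W'$; (ResV) $\Gamma[c\mapsto(n,v)]\triangleright W\xrightarrow{\lambda}W'$ with $c$ not occurring in $\lambda$ implies $\Gamma\triangleright\nu c{:}(n,v).W\xrightarrow{\lambda}\nu c{:}(\lambda(\Gamma[c\mapsto(n,v)]))(c).W'$. Reductions. $\Gamma\triangleright W\to\Gamma'\triangleright W'$ iff $\Gamma\triangleright W\xrightarrow{\lambda}W'$ for some $\lambda\in\{c!v,\sigma,\tau\}$ and $\Gamma'=\lambda(\Gamma)$; it is instantaneous ($\to_i$) if $\lambda\neq\sigma$ and timed ($\to_\sigma$) if $\lambda=\sigma$. *)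

theory Defs
  imports Main
begin

datatype ('d, 'x) val = VVar 'x | VErr | VConst 'd

fun closed_val :: "('d, 'x) val \<Rightarrow> bool" where
  "closed_val (VVar _) = False"
| "closed_val _ = True"

datatype ('d, 'x, 'f) exp = EV "('d, 'x) val" | EOp 'f "('d, 'x, 'f) exp list"

datatype ('d, 'x, 'f, 'ch) bexp = BEq "('d, 'x, 'f) exp" "('d, 'x, 'f) exp" | BExposed 'ch

datatype ('d, 'x, 'f, 'ch, 'X) proc =
    PSnd 'ch "('d, 'x, 'f) exp" "('d, 'x, 'f, 'ch, 'X) proc"
  | PRcv 'ch 'x "('d, 'x, 'f, 'ch, 'X) proc" "('d, 'x, 'f, 'ch, 'X) proc"
  | PSig "('d, 'x, 'f, 'ch, 'X) proc"
  | PTau "('d, 'x, 'f, 'ch, 'X) proc"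
  | PSum "('d, 'x, 'f, 'ch, 'X) proc" "('d, 'x, 'f, 'ch, 'X) proc"
  | PCond "('d, 'x, 'f, 'ch) bexp" "('d, 'x, 'f, 'ch, 'X) proc" "('d, 'x, 'f, 'ch, 'X) proc"
  | PVar 'X
  | PNil
  | PFix 'X "('d, 'x, 'f, 'ch, 'X) proc"

datatype ('d, 'x, 'f, 'ch, 'X) sys =
    Proc "('d, 'x, 'f, 'ch, 'X) proc"
  | ARcv 'ch 'x "('d, 'x, 'f, 'ch, 'X) proc"
  | Par "('d, 'x, 'f, 'ch, 'X) sys" "('d, 'x, 'f, 'ch, 'X) sys"
  | Res 'ch nat "('d, 'x) val" "('d, 'x, 'f, 'ch, 'X) sys"

fun sigmas :: "nat \<Rightarrow> ('d, 'x, 'f, 'ch, 'X) proc \<Rightarrow> ('d, 'x, 'f, 'ch, 'X) proc" where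
  "sigmas 0 P = P"
| "sigmas (Suc n) P = PSig (sigmas n P)"

fun fv_val :: "('d, 'x) val \<Rightarrow> 'x set" where
  "fv_val (VVar x) = {x}"
| "fv_val _ = {}"

fun fv_exp :: "('d, 'x, 'f) exp \<Rightarrow> 'x set" where
  "fv_exp (EV v) = fv_val v"
| "fv_exp (EOp f es) = (\<Union>e\<in>set es. fv_exp e)"

fun fv_bexp :: "('d, 'x, 'f, 'ch) bexp \<Rightarrow> 'x set" where
  "fv_bexp (BEq e1 e2) = fv_exp e1 \<union> fv_exp e2"
| "fv_bexp (BExposed c) = {}"

fun fv_proc :: "('d, 'x, 'f, 'ch, 'X) proc \<Rightarrow> 'x set" where
  "fv_proc (PSnd c e P) = fv_exp e \<union> fv_proc P"
| "fv_proc (PRcv c x P Q) = (fv_proc P - {x}) \<union> fv_proc Q"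
| "fv_proc (PSig P) = fv_proc P"
| "fv_proc (PTau P) = fv_proc P"
| "fv_proc (PSum P Q) = fv_proc P \<union> fv_proc Q"
| "fv_proc (PCond b P Q) = fv_bexp b \<union> fv_proc P \<union> fv_proc Q"
| "fv_proc (PVar X) = {}"
| "fv_proc PNil = {}"
| "fv_proc (PFix X P) = fv_proc P"

fun fpv_proc :: "('d, 'x, 'f, 'ch, 'X) proc \<Rightarrow> 'X set" where
  "fpv_proc (PSnd c e P) = fpv_proc P"
| "fpv_proc (PRcv c x P Q) = fpv_proc P \<union> fpv_proc Q"
| "fpv_proc (PSig P) = fpv_proc P"
| "fpv_proc (PTau P) = fpv_proc P"
| "fpv_proc (PSum P Q) = fpv_proc P \<union> fpv_proc Q"
| "fpv_proc (PCond b P Q) = fpv_proc P \<union> fpv_proc Q"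
| "fpv_proc (PVar X) = {X}"
| "fpv_proc PNil = {}"
| "fpv_proc (PFix X P) = fpv_proc P - {X}"

fun fv_sys :: "('d, 'x, 'f, 'ch, 'X) sys \<Rightarrow> 'x set" where
  "fv_sys (Proc P) = fv_proc P"
| "fv_sys (ARcv c x P) = fv_proc P - {x}"
| "fv_sys (Par W1 W2) = fv_sys W1 \<union> fv_sys W2"
| "fv_sys (Res c n v W) = fv_val v \<union> fv_sys W"

fun fpv_sys :: "('d, 'x, 'f, 'ch, 'X) sys \<Rightarrow> 'X set" where
  "fpv_sys (Proc P) = fpv_proc P"
| "fpv_sys (ARcv c x P) = fpv_proc P"
| "fpv_sys (Par W1 W2) = fpv_sys W1 \<union> fpv_sys W2"
| "fpv_sys (Res c n v W) = fpv_sys W"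

text \<open>Substitution of a closed value for a data variable (no capture can occur
  since the substituted value is closed).\<close>
fun subst_val :: "('d, 'x) val \<Rightarrow> 'x \<Rightarrow> ('d, 'x) val \<Rightarrow> ('d, 'x) val" where
  "subst_val w x (VVar y) = (if x = y then w else VVar y)"
| "subst_val w x v = v"

fun subst_exp :: "('d, 'x) val \<Rightarrow> 'x \<Rightarrow> ('d, 'x, 'f) exp \<Rightarrow> ('d, 'x, 'f) exp" where
  "subst_exp w x (EV v) = EV (subst_val w x v)"
| "subst_exp w x (EOp f es) = EOp f (map (subst_exp w x) es)"

fun subst_bexp :: "('d, 'x) val \<Rightarrow> 'x \<Rightarrow> ('d, 'x, 'f, 'ch) bexp \<Rightarrow> ('d, 'x, 'f, 'ch) bexp" where
  "subst_bexp w x (BEq e1 e2) = BEq (subst_exp w x e1) (subst_exp w x e2)"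
| "subst_bexp w x (BExposed c) = BExposed c"

fun subst_proc :: "('d, 'x) val \<Rightarrow> 'x \<Rightarrow> ('d, 'x, 'f, 'ch, 'X) proc \<Rightarrow> ('d, 'x, 'f, 'ch, 'X) proc" where
  "subst_proc w x (PSnd c e P) = PSnd c (subst_exp w x e) (subst_proc w x P)"
| "subst_proc w x (PRcv c y P Q) =
     PRcv c y (if x = y then P else subst_proc w x P) (subst_proc w x Q)"
| "subst_proc w x (PSig P) = PSig (subst_proc w x P)"
| "subst_proc w x (PTau P) = PTau (subst_proc w x P)"
| "subst_proc w x (PSum P Q) = PSum (subst_proc w x P) (subst_proc w x Q)"
| "subst_proc w x (PCond b P Q) = PCond (subst_bexp w x b) (subst_proc w x P) (subst_proc w x Q)"
| "subst_proc w x (PVar X) = PVar X"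
| "subst_proc w x PNil = PNil"
| "subst_proc w x (PFix X P) = PFix X (subst_proc w x P)"

fun psubst :: "('d, 'x, 'f, 'ch, 'X) proc \<Rightarrow> 'X \<Rightarrow> ('d, 'x, 'f, 'ch, 'X) proc \<Rightarrow> ('d, 'x, 'f, 'ch, 'X) proc" where
  "psubst R X (PSnd c e P) = PSnd c e (psubst R X P)"
| "psubst R X (PRcv c y P Q) = PRcv c y (psubst R X P) (psubst R X Q)"
| "psubst R X (PSig P) = PSig (psubst R X P)"
| "psubst R X (PTau P) = PTau (psubst R X P)"
| "psubst R X (PSum P Q) = PSum (psubst R X P) (psubst R X Q)"
| "psubst R X (PCond b P Q) = PCond b (psubst R X P) (psubst R X Q)"
| "psubst R X (PVar Y) = (if X = Y then R else PVar Y)"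
| "psubst R X PNil = PNil"
| "psubst R X (PFix Y P) = (if X = Y then PFix Y P else PFix Y (psubst R X P))"

fun unguarded :: "'X \<Rightarrow> ('d, 'x, 'f, 'ch, 'X) proc \<Rightarrow> bool" where
  "unguarded X (PSnd c e P) = False"
| "unguarded X (PRcv c y P Q) = False"
| "unguarded X (PSig P) = False"
| "unguarded X (PTau P) = unguarded X P"
| "unguarded X (PSum P Q) = (unguarded X P \<or> unguarded X Q)"
| "unguarded X (PCond b P Q) = False"
| "unguarded X (PVar Y) = (X = Y)"
| "unguarded X PNil = False"
| "unguarded X (PFix Y P) = (X \<noteq> Y \<and> unguarded X P)"

fun wf_proc :: "('d, 'x, 'f, 'ch, 'X) proc \<Rightarrow> bool" where
  "wf_proc (PSnd c e P) = wf_proc P"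
| "wf_proc (PRcv c y P Q) = (wf_proc P \<and> wf_proc Q)"
| "wf_proc (PSig P) = wf_proc P"
| "wf_proc (PTau P) = wf_proc P"
| "wf_proc (PSum P Q) = (wf_proc P \<and> wf_proc Q)"
| "wf_proc (PCond b P Q) = (wf_proc P \<and> wf_proc Q)"
| "wf_proc (PVar Y) = True"
| "wf_proc PNil = True"
| "wf_proc (PFix X P) = (\<not> unguarded X P \<and> wf_proc P)"

fun wf_sys :: "('d, 'x, 'f, 'ch, 'X) sys \<Rightarrow> bool" where
  "wf_sys (Proc P) = wf_proc P"
| "wf_sys (ARcv c x P) = wf_proc P"
| "wf_sys (Par W1 W2) = (wf_sys W1 \<and> wf_sys W2)"
| "wf_sys (Res c n v W) = (closed_val v \<and> wf_sys W)"

type_synonym ('ch, 'd, 'x) env = "'ch \<Rightarrow> nat \<times> ('d, 'x) val"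

definition idle :: "('ch, 'd, 'x) env \<Rightarrow> 'ch \<Rightarrow> bool" where
  "idle \<Gamma> c \<longleftrightarrow> fst (\<Gamma> c) = 0"

definition exposed :: "('ch, 'd, 'x) env \<Rightarrow> 'ch \<Rightarrow> bool" where
  "exposed \<Gamma> c \<longleftrightarrow> fst (\<Gamma> c) \<noteq> 0"

datatype ('ch, 'd, 'x) act = AOut 'ch "('d, 'x) val" | AIn 'ch "('d, 'x) val" | ASig | ATau

fun act_chan :: "('ch, 'd, 'x) act \<Rightarrow> 'ch option" where
  "act_chan (AOut c v) = Some c"
| "act_chan (AIn c v) = Some c"
| "act_chan ASig = None"
| "act_chan ATau = None"

definition bcast_upd :: "(('d, 'x) val \<Rightarrow> nat) \<Rightarrow> 'ch \<Rightarrow> ('d, 'x) val \<Rightarrow> ('ch, 'd, 'x) env \<Rightarrow> ('ch, 'd, 'x) env" where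
  "bcast_upd \<delta> c v \<Gamma> = \<Gamma>(c := (if fst (\<Gamma> c) = 0 then (\<delta> v, v)
                                 else (max (\<delta> v) (fst (\<Gamma> c)), VErr)))"

fun env_upd :: "(('d, 'x) val \<Rightarrow> nat) \<Rightarrow> ('ch, 'd, 'x) act \<Rightarrow> ('ch, 'd, 'x) env \<Rightarrow> ('ch, 'd, 'x) env" where
  "env_upd \<delta> ASig \<Gamma> = (\<lambda>c. (fst (\<Gamma> c) - 1, snd (\<Gamma> c)))"
| "env_upd \<delta> (AOut c v) \<Gamma> = bcast_upd \<delta> c v \<Gamma>"
| "env_upd \<delta> (AIn c v) \<Gamma> = bcast_upd \<delta> c v \<Gamma>"
| "env_upd \<delta> ATau \<Gamma> = \<Gamma>"

fun eval :: "('f \<Rightarrow> ('d, 'x) val list \<Rightarrow> ('d, 'x) val) \<Rightarrow> ('d, 'x, 'f) exp \<Rightarrow> ('d, 'x) val" where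
  "eval I (EV v) = v"
| "eval I (EOp f es) = I f (map (eval I) es)"

fun beval :: "('f \<Rightarrow> ('d, 'x) val list \<Rightarrow> ('d, 'x) val) \<Rightarrow> ('ch, 'd, 'x) env \<Rightarrow> ('d, 'x, 'f, 'ch) bexp \<Rightarrow> bool" where
  "beval I \<Gamma> (BEq e1 e2) = (eval I e1 = eval I e2)"
| "beval I \<Gamma> (BExposed c) = exposed \<Gamma> c"

fun rcv :: "('d, 'x, 'f, 'ch, 'X) sys \<Rightarrow> 'ch \<Rightarrow> bool" where
  "rcv (Proc (PRcv d x P Q)) c = (d = c)"
| "rcv (Proc (PSum P Q)) c = (rcv (Proc P) c \<or> rcv (Proc Q) c)"
| "rcv (Proc (PFix X P)) c = rcv (Proc P) c"
| "rcv (Par W1 W2) c = (rcv W1 c \<or> rcv W2 c)"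
| "rcv (Res d n v W) c = (d \<noteq> c \<and> rcv W c)"
| "rcv _ c = False"

definition rcv_cfg :: "('ch, 'd, 'x) env \<Rightarrow> ('d, 'x, 'f, 'ch, 'X) sys \<Rightarrow> 'ch \<Rightarrow> bool" where
  "rcv_cfg \<Gamma> W c \<longleftrightarrow> idle \<Gamma> c \<and> rcv W c"

inductive trans :: "(('d, 'x) val \<Rightarrow> nat) \<Rightarrow> ('f \<Rightarrow> ('d, 'x) val list \<Rightarrow> ('d, 'x) val)
    \<Rightarrow> ('ch, 'd, 'x) env \<Rightarrow> ('d, 'x, 'f, 'ch, 'X) sys \<Rightarrow> ('ch, 'd, 'x) act
    \<Rightarrow> ('d, 'x, 'f, 'ch, 'X) sys \<Rightarrow> bool"
  for \<delta> I where
  Snd: "eval I e = v \<Longrightarrow> trans \<delta> I \<Gamma> (Proc (PSnd c e P)) (AOut c v) (Proc (sigmas (\<delta> v) P))"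
| Rcv: "idle \<Gamma> c \<Longrightarrow> trans \<delta> I \<Gamma> (Proc (PRcv c x P Q)) (AIn c v) (ARcv c x P)"
| RcvIgn: "\<not> rcv_cfg \<Gamma> W c \<Longrightarrow> trans \<delta> I \<Gamma> W (AIn c v) W"
| Sync1: "trans \<delta> I \<Gamma> W1 (AOut c v) W1' \<Longrightarrow> trans \<delta> I \<Gamma> W2 (AIn c v) W2'
          \<Longrightarrow> trans \<delta> I \<Gamma> (Par W1 W2) (AOut c v) (Par W1' W2')"
| Sync2: "trans \<delta> I \<Gamma> W1 (AIn c v) W1' \<Longrightarrow> trans \<delta> I \<Gamma> W2 (AOut c v) W2'
          \<Longrightarrow> trans \<delta> I \<Gamma> (Par W1 W2) (AOut c v) (Par W1' W2')"
| RcvPar: "trans \<delta> I \<Gamma> W1 (AIn c v) W1' \<Longrightarrow> trans \<delta> I \<Gamma> W2 (AIn c v) W2'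
          \<Longrightarrow> trans \<delta> I \<Gamma> (Par W1 W2) (AIn c v) (Par W1' W2')"
| TimeNil: "trans \<delta> I \<Gamma> (Proc PNil) ASig (Proc PNil)"
| Sleep: "trans \<delta> I \<Gamma> (Proc (PSig P)) ASig (Proc P)"
| ActRcv: "fst (\<Gamma> c) > 1 \<Longrightarrow> trans \<delta> I \<Gamma> (ARcv c x P) ASig (ARcv c x P)"
| EndRcv: "\<Gamma> c = (1, w) \<Longrightarrow> trans \<delta> I \<Gamma> (ARcv c x P) ASig (Proc (subst_proc w x P))"
| Timeout: "idle \<Gamma> c \<Longrightarrow> trans \<delta> I \<Gamma> (Proc (PRcv c x P Q)) ASig (Proc Q)"
| RcvLate: "exposed \<Gamma> c \<Longrightarrow> trans \<delta> I \<Gamma> (Proc (PRcv c x P Q)) ATau (ARcv c x (subst_proc VErr x P))"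
| Tau: "trans \<delta> I \<Gamma> (Proc (PTau P)) ATau (Proc P)"
| Then: "beval I \<Gamma> b \<Longrightarrow> trans \<delta> I \<Gamma> (Proc (PCond b P Q)) ATau (Proc (PSig P))"
| Else: "\<not> beval I \<Gamma> b \<Longrightarrow> trans \<delta> I \<Gamma> (Proc (PCond b P Q)) ATau (Proc (PSig Q))"
| TimePar: "trans \<delta> I \<Gamma> W1 ASig W1' \<Longrightarrow> trans \<delta> I \<Gamma> W2 ASig W2'
          \<Longrightarrow> trans \<delta> I \<Gamma> (Par W1 W2) ASig (Par W1' W2')"
| TauPar1: "trans \<delta> I \<Gamma> W1 ATau W1' \<Longrightarrow> trans \<delta> I \<Gamma> (Par W1 W2) ATau (Par W1' W2)"
| TauPar2: "trans \<delta> I \<Gamma> W2 ATau W2' \<Longrightarrow> trans \<delta> I \<Gamma> (Par W1 W2) ATau (Par W1 W2')"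
| Rec: "trans \<delta> I \<Gamma> (Proc (psubst (PFix X P) X P)) a W \<Longrightarrow> trans \<delta> I \<Gamma> (Proc (PFix X P)) a W"
| Sum1: "a = ATau \<or> (\<exists>c v. a = AOut c v) \<Longrightarrow> trans \<delta> I \<Gamma> (Proc P) a W
          \<Longrightarrow> trans \<delta> I \<Gamma> (Proc (PSum P Q)) a W"
| Sum2: "a = ATau \<or> (\<exists>c v. a = AOut c v) \<Longrightarrow> trans \<delta> I \<Gamma> (Proc Q) a W
          \<Longrightarrow> trans \<delta> I \<Gamma> (Proc (PSum P Q)) a W"
| SumTime: "trans \<delta> I \<Gamma> (Proc P) ASig (Proc P') \<Longrightarrow> trans \<delta> I \<Gamma> (Proc Q) ASig (Proc Q')
          \<Longrightarrow> trans \<delta> I \<Gamma> (Proc (PSum P Q)) ASig (Proc (PSum P' Q'))"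
| SumRcv1: "trans \<delta> I \<Gamma> (Proc P) (AIn c v) W \<Longrightarrow> rcv_cfg \<Gamma> (Proc P) c
          \<Longrightarrow> trans \<delta> I \<Gamma> (Proc (PSum P Q)) (AIn c v) W"
| SumRcv2: "trans \<delta> I \<Gamma> (Proc Q) (AIn c v) W \<Longrightarrow> rcv_cfg \<Gamma> (Proc Q) c
          \<Longrightarrow> trans \<delta> I \<Gamma> (Proc (PSum P Q)) (AIn c v) W"
| ResI: "trans \<delta> I (\<Gamma>(c := (n, v))) W (AOut c w) W'
          \<Longrightarrow> (n', v') = env_upd \<delta> (AOut c w) (\<Gamma>(c := (n, v))) c
          \<Longrightarrow> trans \<delta> I \<Gamma> (Res c n v W) ATau (Res c n' v' W')"
| ResV: "trans \<delta> I (\<Gamma>(c := (n, v))) W a W' \<Longrightarrow> act_chan a \<noteq> Some c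
          \<Longrightarrow> (n', v') = env_upd \<delta> a (\<Gamma>(c := (n, v))) c
          \<Longrightarrow> trans \<delta> I \<Gamma> (Res c n v W) a (Res c n' v' W')"

definition config :: "('ch, 'd, 'x) env \<times> ('d, 'x, 'f, 'ch, 'X) sys \<Rightarrow> bool" where
  "config C \<longleftrightarrow> (\<forall>c. closed_val (snd (fst C c))) \<and> fv_sys (snd C) = {} \<and> fpv_sys (snd C) = {}
                  \<and> wf_sys (snd C)"

definition red_i :: "(('d, 'x) val \<Rightarrow> nat) \<Rightarrow> ('f \<Rightarrow> ('d, 'x) val list \<Rightarrow> ('d, 'x) val)
    \<Rightarrow> ('ch, 'd, 'x) env \<times> ('d, 'x, 'f, 'ch, 'X) sys
    \<Rightarrow> ('ch, 'd, 'x) env \<times> ('d, 'x, 'f, 'ch, 'X) sys \<Rightarrow> bool" where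
  "red_i \<delta> I C C' \<longleftrightarrow> config C \<and> config C' \<and>
     (\<exists>a. (a = ATau \<or> (\<exists>c v. a = AOut c v)) \<and>
          trans \<delta> I (fst C) (snd C) a (snd C') \<and> fst C' = env_upd \<delta> a (fst C))"

end

theory Submission
  imports Defs
begin

(* Idea: every closed, well-formed system term W carries a natural number,
   its instantaneous potential, which bounds the number of instantaneous
   (tau or broadcast) steps W can perform before time has to pass.  For a
   process it counts the tau-prefixes in front of the first "blocking" prefix
   (sigma, nil, or a process variable), an action prefix counting as one last
   step; for a system it is the sum over its parallel components.

   The key lemma then shows by rule induction
   on the transition relation that instantaneous actions strictly decrease the
   potential while inputs never increase it; here the hypothesis that every
   transmission takes at least one time unit is what makes a broadcast
   c!<e>.P end up behind a sigma-prefix.  Finally an abstract fact about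
   relations with a strictly decreasing natural-number measure bounds the
   length of every chain of instantaneous reductions by the potential. *)

text \<open>Upper bound on the instantaneous steps a process can take before it
  must let time pass.  Guardedness makes the clause for recursion sound.\<close>
fun inst_potential :: "('d, 'x, 'f, 'ch, 'X) proc \<Rightarrow> nat" where
  "inst_potential (PSnd c e P) = 1"
| "inst_potential (PRcv c x P Q) = 1"
| "inst_potential (PSig P) = 0"
| "inst_potential (PTau P) = Suc (inst_potential P)"
| "inst_potential (PSum P Q) = max (inst_potential P) (inst_potential Q)"
| "inst_potential (PCond b P Q) = 1"
| "inst_potential (PVar X) = 0"
| "inst_potential PNil = 0"
| "inst_potential (PFix X P) = inst_potential P"

text \<open>The potential of a system: active receivers only wait for time to pass.\<close>
fun sys_potential :: "('d, 'x, 'f, 'ch, 'X) sys \<Rightarrow> nat" where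
  "sys_potential (Proc P) = inst_potential P"
| "sys_potential (ARcv c x P) = 0"
| "sys_potential (Par W1 W2) = sys_potential W1 + sys_potential W2"
| "sys_potential (Res c n v W) = sys_potential W"

lemma inst_potential_psubst_guarded:
  "\<not> unguarded X P \<Longrightarrow> inst_potential (psubst R X P) = inst_potential P"
  by (induction P) auto

definition closed_wf :: "('d, 'x, 'f, 'ch, 'X) sys \<Rightarrow> bool" where
  "closed_wf W \<longleftrightarrow> fv_sys W = {} \<and> fpv_sys W = {} \<and> wf_sys W"

lemma config_closed_wf: "config (\<Gamma>, W) \<Longrightarrow> closed_wf W"
  by (simp add: config_def closed_wf_def)

lemma eval_closed:
  assumes "\<And>f vs. (\<forall>v\<in>set vs. closed_val v) \<Longrightarrow> closed_val (I f vs)"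
    and "fv_exp e = {}"
  shows "closed_val (eval I e)"
  using assms(2)
proof (induction e)
  case (EV v)
  then show ?case by (cases v) auto
next
  case (EOp f es)
  then show ?case using assms(1) by auto
qed

lemma fv_psubst: "fv_proc (psubst R X P) \<subseteq> fv_proc P \<union> fv_proc R"
  by (induction P) auto

lemma fpv_psubst: "fpv_proc (psubst R X P) \<subseteq> (fpv_proc P - {X}) \<union> fpv_proc R"
  by (induction P) auto

lemma unguarded_fpv: "unguarded Y R \<Longrightarrow> Y \<in> fpv_proc R"
  by (induction R) auto

lemma unguarded_psubst:
  "fpv_proc R = {} \<Longrightarrow> unguarded Y (psubst R X P) \<Longrightarrow> unguarded Y P"
  by (induction P) (auto dest: unguarded_fpv split: if_splits)

lemma wf_psubst:
  "wf_proc P \<Longrightarrow> wf_proc R \<Longrightarrow> fpv_proc R = {} \<Longrightarrow> wf_proc (psubst R X P)"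
  by (induction P) (auto dest: unguarded_psubst)

lemma unfold_fix:
  assumes "closed_wf (Proc (PFix X P))"
  shows "closed_wf (Proc (psubst (PFix X P) X P))"
    and "inst_potential (psubst (PFix X P) X P) = inst_potential P"
proof -
  show "closed_wf (Proc (psubst (PFix X P) X P))"
    using assms fv_psubst[of "PFix X P" X P] fpv_psubst[of "PFix X P" X P]
      wf_psubst[of P "PFix X P" X]
    by (auto simp: closed_wf_def)
  show "inst_potential (psubst (PFix X P) X P) = inst_potential P"
    using assms by (simp add: closed_wf_def inst_potential_psubst_guarded)
qed

text \<open>Key lemma: from a closed well-formed term, tau and broadcast actions
  strictly decrease the potential and input actions do not increase it (the
  latter is needed for the synchronisation rules).\<close>
lemma trans_potential:
  assumes "trans \<delta> I \<Gamma> W a W'"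
    and "closed_wf W"
    and delta_pos: "\<And>v. closed_val v \<Longrightarrow> \<delta> v \<ge> 1"
    and I_closed: "\<And>f vs. (\<forall>v\<in>set vs. closed_val v) \<Longrightarrow> closed_val (I f vs)"
  shows "((a = ATau \<or> (\<exists>c v. a = AOut c v)) \<longrightarrow> sys_potential W' < sys_potential W)
       \<and> ((\<exists>c v. a = AIn c v) \<longrightarrow> sys_potential W' \<le> sys_potential W)"
  using assms(1,2)
proof (induction rule: trans.induct)
  case (Snd e v \<Gamma> c P)
  text \<open>The sent value is closed, so its transmission delays the continuation.\<close>
  then have "closed_val v"
    using eval_closed[OF I_closed] by (auto simp: closed_wf_def)
  then have "\<delta> v \<ge> 1" by (rule delta_pos)
  then obtain n where "\<delta> v = Suc n" by (cases "\<delta> v") auto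
  then show ?case by simp
next
  case (Rec \<Gamma> X P a W)
  then show ?case using unfold_fix[OF Rec.prems] by simp
qed (auto simp: closed_wf_def)

lemma red_i_potential:
  assumes "red_i \<delta> I C C'"
    and "\<And>v. closed_val v \<Longrightarrow> \<delta> v \<ge> 1"
    and "\<And>f vs. (\<forall>v\<in>set vs. closed_val v) \<Longrightarrow> closed_val (I f vs)"
  shows "sys_potential (snd C') < sys_potential (snd C)"
proof -
  obtain a where "config C" and inst: "a = ATau \<or> (\<exists>c v. a = AOut c v)"
    and step: "trans \<delta> I (fst C) (snd C) a (snd C')"
    using assms(1) by (auto simp: red_i_def)
  have "closed_wf (snd C)"
    using \<open>config C\<close> config_closed_wf[of "fst C" "snd C"] by simp
  with step inst show ?thesis using trans_potential[OF step _ assms(2,3)] by simp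
qed

lemma relpowp_measure_bound:
  fixes f :: "'a \<Rightarrow> nat"
  assumes decrease: "\<And>x y. R x y \<Longrightarrow> f y < f x"
  shows "(R ^^ h) x y \<Longrightarrow> h + f y \<le> f x"
proof (induction h arbitrary: y)
  case 0
  then show ?case by simp
next
  case (Suc h)
  then obtain z where "(R ^^ h) x z" and "R z y"
    by (auto elim: relpowp_Suc_E)
  with Suc.IH decrease show ?case by fastforce
qed

theorem mainTheorem12:
  fixes \<delta> :: "('d, 'x) val \<Rightarrow> nat"
    and I :: "'f \<Rightarrow> ('d, 'x) val list \<Rightarrow> ('d, 'x) val"
    and \<Gamma> :: "('ch, 'd, 'x) env"
    and W :: "('d, 'x, 'f, 'ch, 'X) sys"
  assumes delta_pos: "\<And>v. closed_val v \<Longrightarrow> \<delta> v \<ge> 1"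
    and I_closed: "\<And>f vs. (\<forall>v\<in>set vs. closed_val v) \<Longrightarrow> closed_val (I f vs)"
    and cfg: "config (\<Gamma>, W)"
  shows "\<exists>k::nat. \<forall>h C'. ((red_i \<delta> I) ^^ h) (\<Gamma>, W) C' \<longrightarrow> h \<le> k"
proof (intro exI allI impI)
  fix h C'
  assume chain: "((red_i \<delta> I) ^^ h) (\<Gamma>, W) C'"
  have decrease: "\<And>C C''. red_i \<delta> I C C''
      \<Longrightarrow> (sys_potential \<circ> snd) C'' < (sys_potential \<circ> snd) C"
    using red_i_potential[OF _ delta_pos I_closed] by simp
  have "h + (sys_potential \<circ> snd) C' \<le> (sys_potential \<circ> snd) (\<Gamma>, W)"
    by (rule relpowp_measure_bound[OF decrease chain])
  then show "h \<le> sys_potential W" by simp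
qed

end
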